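(* For any instance of the online volunteer notification problem, the ex ante solution $\mathbf{x}^*$ satisfies $f(\mathbf{x}^* )\ge\left(1-\frac1e\right)\mathbf{LP}$.
   Context: Instance data: volunteers $[V]$, task types $[S]$, horizon $T$, arrival probabilities $\lambda_{s,t}\ge0$ with $\sum_{s=1}^S\lambda_{s,t}\le1$, match probabilities $p_{v,s}\in[0,1]$, and a probability mass function $g$ on the positive integers with CDF $G(\tau)=\sum_{i\le\tau}g(i)$, $G(0)=0$. $\mathcal{P}$: set of $\mathbf{x}\in\mathbb{R}^{V\times S\times T}$ with $0\le x_{v,s,t}\le1$ and $\sum_{\tau=1}^t\sum_{s=1}^S\lambda_{s,\tau}x_{v,s,\tau}(1-G(t-\tau))\le1$ for all $v,t$. $\mathbf{LP}=\max_{\mathbf{x}\in\mathcal{P}}\sum_{t=1}^T\sum_{s=1}^S\lambda_{s,t}\min\{\sum_v x_{v,s,t}p_{v,s},1\}$. $f(\mathbf{x})=\sum_{t=1}^T\sum_{s=1}^S\lambda_{s,t}\big(1-\prod_{v=1}^V(1-x_{v,s,t}p_{v,s})\big)$. Candidates: $\mathbf{x}^*_{LP}$ is an optimal solution of $\mathbf{LP}$; $\mathbf{x}^*_{AA}$ is the output of the procedure (for some $m\in\mathbb{N}$): $\mathbf{x}^0=\mathbf{0}$; for $i=1,\dots,m$, $\mathbf{y}^i\in\arg\max_{\mathbf{x}\in\mathcal{P}}\langle\mathbf{x},\nabla f(\mathbf{x}^{i-1})\rangle$ and $\mathbf{x}^i=\mathbf{x}^{i-1}+\frac1m\mathbf{y}^i$;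 output $\mathbf{x}^m$. $\mathbf{x}^*_{SQ}$ is built for $v=1,\dots,V$ in order: $(x^{SQ}_{v,s,t})_{s\in[S],t\in[T]}$ is an optimal solution of $\max\sum_{t,s}\lambda_{s,t}\big(\prod_{u<v}(1-p_{u,s}x^{SQ}_{u,s,t})\big)p_{v,s}x_{v,s,t}$ subject to $0\le x_{v,s,t}\le1$ for all $s,t$ and $\sum_{\tau=1}^t\sum_s\lambda_{s,\tau}x_{v,s,\tau}(1-G(t-\tau))\le1$ for all $t$. The ex ante solution is $\mathbf{x}^*\in\arg\max_{\mathbf{x}\in\{\mathbf{x}^*_{LP},\mathbf{x}^*_{AA},\mathbf{x}^*_{SQ}\}}f(\mathbf{x})$. *)

theory Defs
  imports Complex_Main
begin

text \<open>Indices: volunteers v in {1..V}, task types s in {1..S}, periods t in {1..T}.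
  lam s t = arrival probability, p v s = match probability, g = pmf on positive integers.
  A point x of R^(V x S x T) is a function x v s t (values outside the index range are irrelevant).\<close>

definition Gcdf :: "(nat \<Rightarrow> real) \<Rightarrow> nat \<Rightarrow> real" where
  "Gcdf g \<tau> = (\<Sum>i\<in>{1..\<tau>}. g i)"

definition polytope ::
  "nat \<Rightarrow> nat \<Rightarrow> nat \<Rightarrow> (nat \<Rightarrow> nat \<Rightarrow> real) \<Rightarrow> (nat \<Rightarrow> real) \<Rightarrow> (nat \<Rightarrow> nat \<Rightarrow> nat \<Rightarrow> real) set" where
  "polytope V S T lam g =
     {x. (\<forall>v\<in>{1..V}. \<forall>s\<in>{1..S}. \<forall>t\<in>{1..T}. 0 \<le> x v s t \<and> x v s t \<le> 1) \<and>
         (\<forall>v\<in>{1..V}. \<forall>t\<in>{1..T}.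
            (\<Sum>\<tau>\<in>{1..t}. \<Sum>s\<in>{1..S}. lam s \<tau> * x v s \<tau> * (1 - Gcdf g (t - \<tau>))) \<le> 1)}"

definition lp_obj ::
  "nat \<Rightarrow> nat \<Rightarrow> nat \<Rightarrow> (nat \<Rightarrow> nat \<Rightarrow> real) \<Rightarrow> (nat \<Rightarrow> nat \<Rightarrow> real) \<Rightarrow> (nat \<Rightarrow> nat \<Rightarrow> nat \<Rightarrow> real) \<Rightarrow> real" where
  "lp_obj V S T lam p x =
     (\<Sum>t\<in>{1..T}. \<Sum>s\<in>{1..S}. lam s t * min (\<Sum>v\<in>{1..V}. x v s t * p v s) 1)"

definition LP_val ::
  "nat \<Rightarrow> nat \<Rightarrow> nat \<Rightarrow> (nat \<Rightarrow> nat \<Rightarrow> real) \<Rightarrow> (nat \<Rightarrow> nat \<Rightarrow> real) \<Rightarrow> (nat \<Rightarrow> real) \<Rightarrow> real" where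
  "LP_val V S T lam p g = Sup (lp_obj V S T lam p ` polytope V S T lam g)"

definition f_obj ::
  "nat \<Rightarrow> nat \<Rightarrow> nat \<Rightarrow> (nat \<Rightarrow> nat \<Rightarrow> real) \<Rightarrow> (nat \<Rightarrow> nat \<Rightarrow> real) \<Rightarrow> (nat \<Rightarrow> nat \<Rightarrow> nat \<Rightarrow> real) \<Rightarrow> real" where
  "f_obj V S T lam p x =
     (\<Sum>t\<in>{1..T}. \<Sum>s\<in>{1..S}. lam s t * (1 - (\<Prod>v\<in>{1..V}. (1 - x v s t * p v s))))"

text \<open>Gradient of f (f is multilinear; this is its partial derivative w.r.t. x v s t).\<close>
definition grad_f ::
  "nat \<Rightarrow> (nat \<Rightarrow> nat \<Rightarrow> real) \<Rightarrow> (nat \<Rightarrow> nat \<Rightarrow> real) \<Rightarrow> (nat \<Rightarrow> nat \<Rightarrow> nat \<Rightarrow> real) \<Rightarrow> nat \<Rightarrow> nat \<Rightarrow> nat \<Rightarrow> real" where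
  "grad_f V lam p x v s t = lam s t * p v s * (\<Prod>u\<in>{1..V} - {v}. (1 - x u s t * p u s))"

definition inner_vst ::
  "nat \<Rightarrow> nat \<Rightarrow> nat \<Rightarrow> (nat \<Rightarrow> nat \<Rightarrow> nat \<Rightarrow> real) \<Rightarrow> (nat \<Rightarrow> nat \<Rightarrow> nat \<Rightarrow> real) \<Rightarrow> real" where
  "inner_vst V S T x y = (\<Sum>v\<in>{1..V}. \<Sum>s\<in>{1..S}. \<Sum>t\<in>{1..T}. x v s t * y v s t)"

definition is_LP_optimal where
  "is_LP_optimal V S T lam p g x \<longleftrightarrow>
     x \<in> polytope V S T lam g \<and>
     (\<forall>z\<in>polytope V S T lam g. lp_obj V S T lam p z \<le> lp_obj V S T lam p x)"

text \<open>Output of the continuous-greedy style procedure, for some m >= 1 and some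
  choice of maximizers y^i.\<close>
definition is_AA_output where
  "is_AA_output V S T lam p g x \<longleftrightarrow>
     (\<exists>m::nat. m \<ge> 1 \<and> (\<exists>xs ys :: nat \<Rightarrow> nat \<Rightarrow> nat \<Rightarrow> nat \<Rightarrow> real.
        xs 0 = (\<lambda>_ _ _. 0) \<and>
        (\<forall>i\<in>{1..m}.
           ys i \<in> polytope V S T lam g \<and>
           (\<forall>z\<in>polytope V S T lam g.
              inner_vst V S T z (grad_f V lam p (xs (i - 1)))
                \<le> inner_vst V S T (ys i) (grad_f V lam p (xs (i - 1)))) \<and>
           xs i = (\<lambda>v s t. xs (i - 1) v s t + ys i v s t / real m)) \<and>
        x = xs m))"

definition row_feasible ::
  "nat \<Rightarrow> nat \<Rightarrow> (nat \<Rightarrow> nat \<Rightarrow> real) \<Rightarrow> (nat \<Rightarrow> real) \<Rightarrow> (nat \<Rightarrow> nat \<Rightarrow> real) \<Rightarrow> bool" where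
  "row_feasible S T lam g r \<longleftrightarrow>
     (\<forall>s\<in>{1..S}. \<forall>t\<in>{1..T}. 0 \<le> r s t \<and> r s t \<le> 1) \<and>
     (\<forall>t\<in>{1..T}. (\<Sum>\<tau>\<in>{1..t}. \<Sum>s\<in>{1..S}. lam s \<tau> * r s \<tau> * (1 - Gcdf g (t - \<tau>))) \<le> 1)"

definition sq_obj ::
  "nat \<Rightarrow> nat \<Rightarrow> (nat \<Rightarrow> nat \<Rightarrow> real) \<Rightarrow> (nat \<Rightarrow> nat \<Rightarrow> real) \<Rightarrow> (nat \<Rightarrow> nat \<Rightarrow> nat \<Rightarrow> real) \<Rightarrow> nat \<Rightarrow> (nat \<Rightarrow> nat \<Rightarrow> real) \<Rightarrow> real" where
  "sq_obj S T lam p xsq v r =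
     (\<Sum>t\<in>{1..T}. \<Sum>s\<in>{1..S}.
        lam s t * (\<Prod>u\<in>{1..<v}. (1 - p u s * xsq u s t)) * p v s * r s t)"

definition is_SQ_solution where
  "is_SQ_solution V S T lam p g xsq \<longleftrightarrow>
     (\<forall>v\<in>{1..V}. row_feasible S T lam g (xsq v) \<and>
        (\<forall>r. row_feasible S T lam g r \<longrightarrow> sq_obj S T lam p xsq v r \<le> sq_obj S T lam p xsq v (xsq v)))"

end

theory Submission
  imports Defs "HOL-Analysis.Convex"
begin

text \<open>It suffices to look at the LP optimum: for independent events with probabilities
  \<open>a\<^sub>v\<close>, the probability \<open>1 - \<Prod>(1 - a\<^sub>v)\<close> that at least one occurs is at least
  \<open>1 - exp (- \<Sum>a\<^sub>v)\<close>, and the concave function \<open>1 - exp (- \<sigma>)\<close> lies above its chord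
  \<open>(1 - 1/e) \<sigma>\<close> on \<open>[0, 1]\<close>. Hence \<open>f\<close> dominates \<open>(1 - 1/e)\<close> times the LP objective term
  by term, and \<open>x\<^sup>*\<close> is at least as good as \<open>x\<^sub>L\<^sub>P\<close>.\<close>

lemma exp_neg_le_chord:
  fixes m :: real
  assumes "0 \<le> m" "m \<le> 1"
  shows "exp (- m) \<le> (1 - m) + m * exp (-1)"
  using convex_onD[OF exp_convex, of m 0 "-1"] assms by simp

lemma one_minus_exp_neg_ge_min:
  fixes \<sigma> :: real
  assumes "0 \<le> \<sigma>"
  shows "(1 - 1 / exp 1) * min \<sigma> 1 \<le> 1 - exp (- \<sigma>)"
proof -
  define m where "m = min \<sigma> 1"
  have m: "0 \<le> m" "m \<le> 1" "m \<le> \<sigma>"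
    using assms by (auto simp: m_def)
  have "exp (- \<sigma>) \<le> exp (- m)"
    using m by simp
  also have "\<dots> \<le> (1 - m) + m * exp (-1)"
    using m(1,2) by (rule exp_neg_le_chord)
  finally show ?thesis
    by (simp add: m_def[symmetric] exp_minus field_simps)
qed

lemma one_minus_prod_ge_min_sum:
  fixes a :: "'a \<Rightarrow> real"
  assumes "finite A" and a: "\<And>v. v \<in> A \<Longrightarrow> 0 \<le> a v \<and> a v \<le> 1"
  shows "(1 - 1 / exp 1) * min (\<Sum>v\<in>A. a v) 1 \<le> 1 - (\<Prod>v\<in>A. 1 - a v)"
proof -
  have "(\<Prod>v\<in>A. 1 - a v) \<le> (\<Prod>v\<in>A. exp (- a v))"
    using a by (intro prod_mono) (auto simp: exp_ge_add_one_self[of "- a _", simplified])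
  also have "\<dots> = exp (- (\<Sum>v\<in>A. a v))"
    using exp_sum[OF \<open>finite A\<close>, of "\<lambda>v. - a v"] by (simp add: sum_negf)
  finally have "(\<Prod>v\<in>A. 1 - a v) \<le> exp (- (\<Sum>v\<in>A. a v))" .
  moreover have "0 \<le> (\<Sum>v\<in>A. a v)"
    using a by (simp add: sum_nonneg)
  ultimately show ?thesis
    using one_minus_exp_neg_ge_min[of "\<Sum>v\<in>A. a v"] by linarith
qed

lemma f_obj_ge_lp_obj:
  assumes lam_nonneg: "\<forall>s\<in>{1..S}. \<forall>t\<in>{1..T}. 0 \<le> lam s t"
    and p_range: "\<forall>v\<in>{1..V}. \<forall>s\<in>{1..S}. 0 \<le> p v s \<and> p v s \<le> 1"
    and x_range: "\<forall>v\<in>{1..V}. \<forall>s\<in>{1..S}. \<forall>t\<in>{1..T}. 0 \<le> x v s t \<and> x v s t \<le> 1"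
  shows "(1 - 1 / exp 1) * lp_obj V S T lam p x \<le> f_obj V S T lam p x"
proof -
  have "(1 - 1 / exp 1) * lp_obj V S T lam p x
      = (\<Sum>t\<in>{1..T}. \<Sum>s\<in>{1..S}.
           lam s t * ((1 - 1 / exp 1) * min (\<Sum>v\<in>{1..V}. x v s t * p v s) 1))"
    unfolding lp_obj_def by (simp add: sum_distrib_left algebra_simps)
  also have "\<dots> \<le> f_obj V S T lam p x"
    unfolding f_obj_def
  proof (intro sum_mono mult_left_mono)
    fix t s
    assume "t \<in> {1..T}" "s \<in> {1..S}"
    then show "0 \<le> lam s t"
      using lam_nonneg by auto
    show "(1 - 1 / exp 1) * min (\<Sum>v\<in>{1..V}. x v s t * p v s) 1
        \<le> 1 - (\<Prod>v\<in>{1..V}. 1 - x v s t * p v s)"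
      using x_range p_range \<open>t \<in> {1..T}\<close> \<open>s \<in> {1..S}\<close>
      by (intro one_minus_prod_ge_min_sum) (auto intro: mult_le_one)
  qed
  finally show ?thesis .
qed

lemma LP_val_eq_lp_obj:
  assumes "is_LP_optimal V S T lam p g x"
  shows "LP_val V S T lam p g = lp_obj V S T lam p x"
  using assms unfolding LP_val_def is_LP_optimal_def
  by (intro cSup_eq_maximum) auto

theorem proposition2:
  fixes V S T :: nat
    and lam :: "nat \<Rightarrow> nat \<Rightarrow> real"
    and p :: "nat \<Rightarrow> nat \<Rightarrow> real"
    and g :: "nat \<Rightarrow> real"
    and xLP xAA xSQ xstar :: "nat \<Rightarrow> nat \<Rightarrow> nat \<Rightarrow> real"
  assumes lam_nonneg: "\<forall>s\<in>{1..S}. \<forall>t\<in>{1..T}. 0 \<le> lam s t"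
    and lam_sum: "\<forall>t\<in>{1..T}. (\<Sum>s\<in>{1..S}. lam s t) \<le> 1"
    and p_range: "\<forall>v\<in>{1..V}. \<forall>s\<in>{1..S}. 0 \<le> p v s \<and> p v s \<le> 1"
    and g_nonneg: "\<forall>i. 0 \<le> g i"
    and g_zero: "g 0 = 0"
    and g_sums: "g sums 1"
    and LP: "is_LP_optimal V S T lam p g xLP"
    and AA: "is_AA_output V S T lam p g xAA"
    and SQ: "is_SQ_solution V S T lam p g xSQ"
    and xstar_mem: "xstar \<in> {xLP, xAA, xSQ}"
    and xstar_max: "\<forall>x\<in>{xLP, xAA, xSQ}. f_obj V S T lam p x \<le> f_obj V S T lam p xstar"
  shows "f_obj V S T lam p xstar \<ge> (1 - 1 / exp 1) * LP_val V S T lam p g"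
proof -
  have "xLP \<in> polytope V S T lam g"
    using LP unfolding is_LP_optimal_def by simp
  then have "\<forall>v\<in>{1..V}. \<forall>s\<in>{1..S}. \<forall>t\<in>{1..T}. 0 \<le> xLP v s t \<and> xLP v s t \<le> 1"
    unfolding polytope_def by simp
  then have "(1 - 1 / exp 1) * LP_val V S T lam p g \<le> f_obj V S T lam p xLP"
    using f_obj_ge_lp_obj[OF lam_nonneg p_range] LP_val_eq_lp_obj[OF LP] by simp
  also have "\<dots> \<le> f_obj V S T lam p xstar"
    using xstar_max by simp
  finally show ?thesis .
qed

end
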